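(* Let $k\geq 2$ be an even integer and let $G$ be an undirected graph whose degeneracy is $k$. Then $f(G)<\frac{k}{k+2}\,n(G)$.
   Context: All graphs are finite and simple. $n(G)$ is the number of vertices and $f(G)$ is the minimum size of a feedback vertex set of $G$ (a set $F\subseteq V(G)$ with $G-F$ acyclic). An ordering $\phi$ of $V(G)$ is a $k$-elimination ordering if each vertex has at most $k$ neighbours preceding it in $\phi$; the degeneracy of $G$ is the least $k$ such that $G$ has a $k$-elimination ordering. *)

theory Defs
  imports Complex_Main
begin

definition graph :: "'a set \<Rightarrow> 'a set set \<Rightarrow> bool" where
  "graph V E \<longleftrightarrow> finite V \<and> (\<forall>e\<in>E. e \<subseteq> V \<and> card e = 2)"

definition adj :: "'a set set \<Rightarrow> 'a \<Rightarrow> 'a \<Rightarrow> bool" where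
  "adj E u v \<longleftrightarrow> {u, v} \<in> E"

definition is_cycle_in :: "'a set set \<Rightarrow> 'a set \<Rightarrow> 'a list \<Rightarrow> bool" where
  "is_cycle_in E S cs \<longleftrightarrow> length cs \<ge> 3 \<and> distinct cs \<and> set cs \<subseteq> S
     \<and> (\<forall>i < length cs - 1. adj E (cs ! i) (cs ! Suc i))
     \<and> adj E (last cs) (hd cs)"

definition acyclic_induced :: "'a set set \<Rightarrow> 'a set \<Rightarrow> bool" where
  "acyclic_induced E S \<longleftrightarrow> \<not> (\<exists>cs. is_cycle_in E S cs)"

definition feedback_vertex_set :: "'a set \<Rightarrow> 'a set set \<Rightarrow> 'a set \<Rightarrow> bool" where
  "feedback_vertex_set V E F \<longleftrightarrow> F \<subseteq> V \<and> acyclic_induced E (V - F)"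

definition fvs_number :: "'a set \<Rightarrow> 'a set set \<Rightarrow> nat" where
  "fvs_number V E = (LEAST m. \<exists>F. feedback_vertex_set V E F \<and> card F = m)"

definition elimination_ordering :: "'a set \<Rightarrow> 'a set set \<Rightarrow> nat \<Rightarrow> 'a list \<Rightarrow> bool" where
  "elimination_ordering V E k xs \<longleftrightarrow> distinct xs \<and> set xs = V \<and>
     (\<forall>i < length xs. card {j. j < i \<and> adj E (xs ! j) (xs ! i)} \<le> k)"

definition degeneracy :: "'a set \<Rightarrow> 'a set set \<Rightarrow> nat" where
  "degeneracy V E = (LEAST k. \<exists>xs. elimination_ordering V E k xs)"

end

theory Submission
  imports Defs
begin

(* Let x_0, ..., x_(n-1) be an elimination ordering of width k = 2m - 2. Colour x_1, ..., x_(n-1)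
   greedily with m colours so that every vertex has at most one earlier neighbour of its own
   colour, where x_0 counts as having both colours 0 and 1: the at most 2m - 2 earlier
   neighbours, with x_0 counted twice, fill at most 2m - 1 slots, so some colour occurs at most
   once among them. A vertex set in which every vertex has at most one earlier neighbour induces
   a forest, since the last vertex of a cycle has two. The m colour classes have total size
   n + 1, so one of them has more than n/m vertices, and its complement is a feedback vertex
   set of size less than n - n/m = k n/(k + 2). *)

lemma adj_commute: "adj E u v \<longleftrightarrow> adj E v u"
  unfolding adj_def by (simp add: insert_commute)

lemma fvs_number_le_card:
  assumes "feedback_vertex_set V E F"
  shows "fvs_number V E \<le> card F"
  unfolding fvs_number_def using assms by (intro Least_le) blast

lemma fvs_number_add_card_le:
  assumes "finite V" and "T \<subseteq> V" and "acyclic_induced E T"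
  shows "fvs_number V E + card T \<le> card V"
proof -
  have "feedback_vertex_set V E (V - T)"
    using assms(2,3) by (simp add: feedback_vertex_set_def double_diff)
  then have "fvs_number V E \<le> card V - card T"
    using assms(1,2) fvs_number_le_card by (metis card_Diff_subset finite_subset)
  then show ?thesis
    using card_mono[OF assms(1,2)] by linarith
qed

lemma degeneracy_empty: "degeneracy {} E = 0"
  unfolding degeneracy_def elimination_ordering_def by (rule Least_eq_0) simp

lemma ex_elimination_ordering_degeneracy:
  assumes "finite V"
  shows "\<exists>xs. elimination_ordering V E (degeneracy V E) xs"
proof -
  obtain xs where xs: "distinct xs" "set xs = V"
    using assms finite_distinct_list by blast
  have "card {j. j < i \<and> adj E (xs ! j) (xs ! i)} \<le> length xs" if "i < length xs" for i
  proof -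
    have "{j. j < i \<and> adj E (xs ! j) (xs ! i)} \<subseteq> {..<i}" by auto
    then have "card {j. j < i \<and> adj E (xs ! j) (xs ! i)} \<le> i"
      using card_mono[of "{..<i}"] by fastforce
    then show ?thesis
      using that by simp
  qed
  with xs have "\<exists>k xs. elimination_ordering V E k xs"
    unfolding elimination_ordering_def by blast
  then show ?thesis
    unfolding degeneracy_def by (rule LeastI_ex)
qed

lemma is_cycle_in_two_neighbours:
  assumes "is_cycle_in E S cs" and "v \<in> set cs"
  obtains a b where "a \<in> set cs" "b \<in> set cs" "a \<noteq> b" "a \<noteq> v" "b \<noteq> v"
    "adj E a v" "adj E b v"
proof -
  let ?L = "length cs"
  have L: "?L \<ge> 3" and dcs: "distinct cs"
    and step: "\<And>i. i < ?L - 1 \<Longrightarrow> adj E (cs ! i) (cs ! Suc i)"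
    using assms(1) by (auto simp: is_cycle_in_def)
  then have "cs \<noteq> []" by auto
  then have wrap: "adj E (cs ! (?L - 1)) (cs ! 0)"
    using assms(1) by (simp add: is_cycle_in_def last_conv_nth hd_conv_nth)
  obtain p where p: "p < ?L" "cs ! p = v"
    using assms(2) by (metis in_set_conv_nth)
  define pa where "pa = (if p = 0 then ?L - 1 else p - 1)"
  define pb where "pb = (if p = ?L - 1 then 0 else p + 1)"
  have "adj E v (cs ! pb)"
    using p wrap step[of p] by (cases "p = ?L - 1") (auto simp: pb_def)
  then have "adj E (cs ! pb) v"
    by (metis adj_commute)
  moreover have "adj E (cs ! pa) v"
    using p wrap step[of "p - 1"] by (cases "p = 0") (auto simp: pa_def)
  moreover have "pa < ?L" "pb < ?L" "pa \<noteq> pb" "pa \<noteq> p" "pb \<noteq> p"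
    using p L by (auto simp: pa_def pb_def)
  moreover have "cs ! pa \<noteq> cs ! pb" "cs ! pa \<noteq> cs ! p" "cs ! pb \<noteq> cs ! p"
    using dcs \<open>pa < ?L\<close> \<open>pb < ?L\<close> \<open>pa \<noteq> pb\<close> \<open>pa \<noteq> p\<close> \<open>pb \<noteq> p\<close> p(1)
    by (simp_all add: nth_eq_iff_index_eq)
  ultimately show thesis
    using that[of "cs ! pa" "cs ! pb"] p by simp
qed

lemma acyclic_induced_if_one_back_neighbour:
  fixes f :: "nat \<Rightarrow> 'a" and S :: "nat set"
  assumes inj: "inj_on f S"
    and sparse: "\<And>i. i \<in> S \<Longrightarrow> card {j \<in> S. j < i \<and> adj E (f j) (f i)} \<le> 1"
  shows "acyclic_induced E (f ` S)"
  unfolding acyclic_induced_def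
proof
  assume "\<exists>cs. is_cycle_in E (f ` S) cs"
  then obtain cs where cyc: "is_cycle_in E (f ` S) cs" by blast
  then have cs: "set cs \<subseteq> f ` S" "cs \<noteq> []"
    by (auto simp: is_cycle_in_def)
  define I where "I = {i \<in> S. f i \<in> set cs}"
  have "finite I"
    using inj by (intro finite_imageD[of f]) (auto simp: I_def inj_on_subset intro: finite_subset)
  moreover obtain i0 where "i0 \<in> S" "f i0 = hd cs"
    using cs by (metis hd_in_set image_iff subsetD)
  then have "I \<noteq> {}"
    using cs(2) by (auto simp: I_def)
  ultimately have top: "Max I \<in> I" "\<And>i. i \<in> I \<Longrightarrow> i \<le> Max I"
    by simp_all
  let ?i = "Max I"
  obtain a b where ab: "a \<in> set cs" "b \<in> set cs" "a \<noteq> b" "a \<noteq> f ?i" "b \<noteq> f ?i"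
    "adj E a (f ?i)" "adj E b (f ?i)"
    using is_cycle_in_two_neighbours[OF cyc] top(1) by (auto simp: I_def)
  obtain ia ib where ia: "ia \<in> I" "a = f ia" and ib: "ib \<in> I" "b = f ib"
    using ab(1,2) cs(1) unfolding I_def by blast
  then have "ia < ?i" "ib < ?i"
    using top(2) ab(4,5) by (metis le_neq_implies_less)+
  with ab ia ib have "{ia, ib} \<subseteq> {j \<in> S. j < ?i \<and> adj E (f j) (f ?i)}" "ia \<noteq> ib"
    by (auto simp: I_def)
  then have "2 \<le> card {j \<in> S. j < ?i \<and> adj E (f j) (f ?i)}"
    by (metis card_2_iff card_mono finite_Collect_conjI finite_Collect_less_nat)
  with sparse top(1) show False
    by (fastforce simp: I_def)
qed

definition colours :: "(nat \<Rightarrow> nat) \<Rightarrow> nat \<Rightarrow> nat set" where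
  "colours col j = (if j = 0 then {0, 1} else {col j})"

definition colour_class :: "nat \<Rightarrow> (nat \<Rightarrow> nat) \<Rightarrow> nat \<Rightarrow> nat set" where
  "colour_class n col c = {j. j < n \<and> c \<in> colours col j}"

lemma sum_card_colour_classes:
  assumes "finite T" and "2 \<le> m" and "\<And>j. j \<in> T \<Longrightarrow> j \<noteq> 0 \<Longrightarrow> col j < m"
  shows "(\<Sum>c<m. card {j \<in> T. c \<in> colours col j}) = card T + (if 0 \<in> T then 1 else 0)"
proof -
  have "card {c \<in> {..<m}. c \<in> colours col j} = (if j = 0 then 2 else 1)" if "j \<in> T" for j
  proof -
    have "{c \<in> {..<m}. c \<in> colours col j} = colours col j"
      using assms(2,3) that by (auto simp: colours_def)
    then show ?thesis by (simp add: colours_def)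
  qed
  then have "(\<Sum>c<m. card {j \<in> T. c \<in> colours col j}) = (\<Sum>j\<in>T. if j = 0 then 2 else 1)"
    using assms(1) by (intro sum_multicount_gen) auto
  also have "\<dots> = (\<Sum>j\<in>T. 1) + (\<Sum>j\<in>T. if j = 0 then 1 else 0)"
    by (subst sum.distrib[symmetric]) (intro sum.cong, auto)
  also have "\<dots> = card T + (if 0 \<in> T then 1 else 0)"
    using assms(1) by (simp add: sum.delta)
  finally show ?thesis .
qed

lemma ex_colour_used_at_most_once:
  assumes "finite B" and "2 \<le> m" and "card B + 2 \<le> 2 * m"
    and "\<And>j. j \<in> B \<Longrightarrow> j \<noteq> 0 \<Longrightarrow> col j < m"
  shows "\<exists>c<m. card {j \<in> B. c \<in> colours col j} \<le> 1"
proof (rule ccontr)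
  assume "\<not> ?thesis"
  then have "(\<Sum>c<m. 2) \<le> (\<Sum>c<m. card {j \<in> B. c \<in> colours col j})"
    by (intro sum_mono) auto
  also have "\<dots> = card B + (if 0 \<in> B then 1 else 0)"
    using sum_card_colour_classes assms by blast
  finally show False
    using assms(3) by (simp split: if_splits)
qed

lemma ex_greedy_colouring:
  assumes "\<And>i. i < n \<Longrightarrow> card {j. j < i \<and> R j i} \<le> k"
    and "2 \<le> m" and "k + 2 \<le> 2 * m"
  shows "\<exists>col. \<forall>i. 0 < i \<and> i < n \<longrightarrow>
           col i < m \<and> card {j. j < i \<and> R j i \<and> col i \<in> colours col j} \<le> 1"
  using assms(1)
proof (induction n)
  case 0
  then show ?case by simp
next
  case (Suc n)
  have "\<And>i. i < n \<Longrightarrow> card {j. j < i \<and> R j i} \<le> k"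
    using Suc.prems by simp
  then obtain col where "\<forall>i. 0 < i \<and> i < n \<longrightarrow>
      col i < m \<and> card {j. j < i \<and> R j i \<and> col i \<in> colours col j} \<le> 1"
    using Suc.IH by blast
  then have col: "\<And>i. 0 < i \<Longrightarrow> i < n \<Longrightarrow>
      col i < m \<and> card {j. j < i \<and> R j i \<and> col i \<in> colours col j} \<le> 1"
    by blast
  define B where "B = {j. j < n \<and> R j n}"
  have "card B \<le> k"
    using Suc.prems[of n] by (simp add: B_def)
  then obtain c where c: "c < m" "card {j \<in> B. c \<in> colours col j} \<le> 1"
    using ex_colour_used_at_most_once[of B m col] col assms(2,3) by (force simp: B_def)
  have colours_upd: "colours (col(n := c)) j = colours col j" if "j < n" for j
    using that by (simp add: colours_def)
  have "(col(n := c)) i < m \<and>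
      card {j. j < i \<and> R j i \<and> (col(n := c)) i \<in> colours (col(n := c)) j} \<le> 1"
    if "0 < i" "i < Suc n" for i
  proof (cases "i = n")
    case True
    then have "{j. j < i \<and> R j i \<and> (col(n := c)) i \<in> colours (col(n := c)) j}
        = {j \<in> B. c \<in> colours col j}"
      using colours_upd by (auto simp: B_def)
    then show ?thesis using c True by simp
  next
    case False
    then have "{j. j < i \<and> R j i \<and> (col(n := c)) i \<in> colours (col(n := c)) j}
        = {j. j < i \<and> R j i \<and> col i \<in> colours col j}"
      using colours_upd that by auto
    then show ?thesis using col that False by simp
  qed
  then show ?case by blast
qed

lemma colour_class_one_back_neighbour:
  assumes "\<And>i. 0 < i \<Longrightarrow> i < n \<Longrightarrow> card {j. j < i \<and> R j i \<and> col i \<in> colours col j} \<le> 1"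
    and "i \<in> colour_class n col c"
  shows "card {j \<in> colour_class n col c. j < i \<and> R j i} \<le> 1"
proof (cases "i = 0")
  case False
  with assms(2) have "col i = c" "i < n"
    by (auto simp: colour_class_def colours_def)
  then have "card {j \<in> colour_class n col c. j < i \<and> R j i}
      \<le> card {j. j < i \<and> R j i \<and> col i \<in> colours col j}"
    by (intro card_mono) (auto simp: colour_class_def)
  also have "\<dots> \<le> 1"
    using assms(1) False \<open>i < n\<close> by simp
  finally show ?thesis .
qed simp

lemma ex_sum_lessThan_le_mult:
  fixes f :: "nat \<Rightarrow> nat"
  assumes "0 < m"
  shows "\<exists>c<m. (\<Sum>c<m. f c) \<le> m * f c"
proof -
  have "Max (f ` {..<m}) \<in> f ` {..<m}"
    using assms by (intro Max_in) (auto simp: lessThan_empty_iff)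
  then show ?thesis
    using sum_le_card_Max[of "{..<m}" f] by auto
qed

lemma large_induced_forest:
  assumes elim: "elimination_ordering V E k xs" and "V \<noteq> {}"
    and m: "2 \<le> m" "k + 2 \<le> 2 * m"
  obtains T where "T \<subseteq> V" "acyclic_induced E T" "card V < m * card T"
proof -
  define n where "n = length xs"
  have xs: "distinct xs" "set xs = V"
    and few: "\<And>i. i < n \<Longrightarrow> card {j. j < i \<and> adj E (xs ! j) (xs ! i)} \<le> k"
    using elim by (auto simp: elimination_ordering_def n_def)
  have "0 < n" "card V = n"
    using xs assms(2) by (auto simp: n_def distinct_card)
  obtain col where col: "\<And>i. 0 < i \<Longrightarrow> i < n \<Longrightarrow>
      col i < m \<and> card {j. j < i \<and> adj E (xs ! j) (xs ! i) \<and> col i \<in> colours col j} \<le> 1"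
    using ex_greedy_colouring[of n "\<lambda>j i. adj E (xs ! j) (xs ! i)" k m] few m by blast
  have "(\<Sum>c<m. card (colour_class n col c)) = n + 1"
    using sum_card_colour_classes[of "{..<n}" m col] col m \<open>0 < n\<close>
    by (simp add: colour_class_def lessThan_def)
  moreover obtain c
    where "c < m" "(\<Sum>c<m. card (colour_class n col c)) \<le> m * card (colour_class n col c)"
    using ex_sum_lessThan_le_mult[of m "\<lambda>c. card (colour_class n col c)"] m(1) by auto
  ultimately have big: "n < m * card (colour_class n col c)"
    by simp
  have inj: "inj_on ((!) xs) (colour_class n col c)"
    using xs(1) by (intro inj_on_nth) (auto simp: colour_class_def n_def)
  then have "acyclic_induced E ((!) xs ` colour_class n col c)"
    using colour_class_one_back_neighbour[OF conjunct2[OF col]]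
    by (intro acyclic_induced_if_one_back_neighbour)
  moreover have "(!) xs ` colour_class n col c \<subseteq> V"
    using xs(2) by (auto simp: colour_class_def n_def)
  moreover have "card ((!) xs ` colour_class n col c) = card (colour_class n col c)"
    using inj by (rule card_image)
  ultimately show thesis
    using that big \<open>card V = n\<close> by simp
qed

lemma fvs_number_mult_add_card_less:
  assumes "elimination_ordering V E k xs" and "V \<noteq> {}"
    and "2 \<le> m" and "k + 2 \<le> 2 * m"
  shows "m * fvs_number V E + card V < m * card V"
proof -
  obtain T where T: "T \<subseteq> V" "acyclic_induced E T" "card V < m * card T"
    using assms by (rule large_induced_forest)
  have "finite V"
    using assms(1) by (auto simp: elimination_ordering_def)
  then have "fvs_number V E + card T \<le> card V"
    using T(1,2) by (rule fvs_number_add_card_le)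
  then have "m * fvs_number V E + m * card T \<le> m * card V"
    by (metis add_mult_distrib2 mult_le_mono2)
  with T(3) show ?thesis
    by linarith
qed

theorem mainTheorem2:
  fixes V :: "'a set" and E :: "'a set set" and k :: nat
  assumes "graph V E"
    and "k \<ge> 2" and "even k"
    and "degeneracy V E = k"
  shows "real (fvs_number V E) < real k / real (k + 2) * real (card V)"
proof -
  define m where "m = k div 2 + 1"
  have m: "2 \<le> m" "k + 2 = 2 * m"
    using assms(2,3) by (auto simp: m_def)
  have "finite V"
    using assms(1) by (simp add: graph_def)
  then obtain xs where "elimination_ordering V E k xs"
    using ex_elimination_ordering_degeneracy assms(4) by metis
  moreover have "V \<noteq> {}"
    using assms(2,4) by (auto simp: degeneracy_empty)
  ultimately have "m * fvs_number V E + card V < m * card V"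
    using fvs_number_mult_add_card_less m by (metis order.refl)
  moreover have "k * card V + 2 * card V = 2 * m * card V"
    using m(2) by (metis add_mult_distrib)
  ultimately have "fvs_number V E * (k + 2) < k * card V"
    unfolding m(2) by (simp add: mult.commute mult.left_commute)
  then show ?thesis
    by (simp add: field_simps flip: of_nat_mult)
qed

end
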